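(* Let $R$ be a Noetherian ring, $A$ an $R$-module and $B$ an $R$-submodule of $A$. If $\mathrm{sr}_R(B)$ and $\mathrm{sr}_R(A/B)$ are finite, then $\mathrm{sr}_R(A)\le\mathrm{sr}_R(B)+\mathrm{sr}_R(A/B)$.
   Context: A generating subset of an $R$-submodule is minimal if no proper subset of it generates that submodule. An $R$-module $M$ has special rank $\mathrm{sr}_R(M)=r$ if every finitely generated $R$-submodule of $M$ can be generated by $r$ elements and some finitely generated $R$-submodule of $M$ has a minimal generating subset of exactly $r$ elements. *)

theory Defs
  imports "HOL-Algebra.Algebra" "HOL-Library.Extended_Nat"
begin

definition mspan :: "('a, 'c) ring_scheme \<Rightarrow> ('a, 'b, 'd) module_scheme \<Rightarrow> 'b set \<Rightarrow> 'b set" where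
  "mspan R M S = \<Inter>{N. submodule N R M \<and> S \<subseteq> N}"

definition generates :: "('a, 'c) ring_scheme \<Rightarrow> ('a, 'b, 'd) module_scheme \<Rightarrow> 'b set \<Rightarrow> 'b set \<Rightarrow> bool" where
  "generates R M S N \<longleftrightarrow> S \<subseteq> N \<and> mspan R M S = N"

definition fg_submodule :: "('a, 'c) ring_scheme \<Rightarrow> ('a, 'b, 'd) module_scheme \<Rightarrow> 'b set \<Rightarrow> bool" where
  "fg_submodule R M N \<longleftrightarrow> submodule N R M \<and> (\<exists>S. finite S \<and> generates R M S N)"

definition minimal_generating :: "('a, 'c) ring_scheme \<Rightarrow> ('a, 'b, 'd) module_scheme \<Rightarrow> 'b set \<Rightarrow> 'b set \<Rightarrow> bool" where
  "minimal_generating R M S N \<longleftrightarrow> generates R M S N \<and> (\<forall>T. T \<subset> S \<longrightarrow> \<not> generates R M T N)"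

definition has_special_rank :: "('a, 'c) ring_scheme \<Rightarrow> ('a, 'b, 'd) module_scheme \<Rightarrow> nat \<Rightarrow> bool" where
  "has_special_rank R M r \<longleftrightarrow>
     (\<forall>N. fg_submodule R M N \<longrightarrow> (\<exists>S. finite S \<and> card S \<le> r \<and> generates R M S N)) \<and>
     (\<exists>N S. fg_submodule R M N \<and> minimal_generating R M S N \<and> finite S \<and> card S = r)"

definition special_rank :: "('a, 'c) ring_scheme \<Rightarrow> ('a, 'b, 'd) module_scheme \<Rightarrow> enat" where
  "special_rank R M = (if \<exists>r. has_special_rank R M r
                        then enat (LEAST r. has_special_rank R M r) else \<infinity>)"

definition submod :: "('a, 'b, 'd) module_scheme \<Rightarrow> 'b set \<Rightarrow> ('a, 'b, 'd) module_scheme" where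
  "submod M N = M\<lparr>carrier := N\<rparr>"

definition quot_module :: "('a, 'c) ring_scheme \<Rightarrow> ('a, 'b, 'd) module_scheme \<Rightarrow> 'b set \<Rightarrow> ('a, 'b set) module" where
  "quot_module R M N =
    \<lparr>carrier = A_RCOSETS M N,
     monoid.mult = (\<lambda>_ _. undefined),
     one = undefined,
     ring.zero = N,
     ring.add = set_add M,
     module.smult = (\<lambda>a Y. \<Union>y\<in>Y. a_r_coset M N (smult M a y))\<rparr>"

end

theory Submission
  imports Defs
begin

text \<open>Let N be a finitely generated submodule of A. Because R is Noetherian, N \<inter> B is again
finitely generated: inducting on a finite generating set of N, the step from S to insert x S
only needs finitely many new generators, one for each generator of the (finitely generated)
ideal of x-coefficients of the elements of the submodule in question. Hence N \<inter> B is generated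
by sr(B) elements. The image of N in A/B is finitely generated, hence generated by sr(A/B)
cosets; lifting them to N and adding the generators of N \<inter> B gives a generating set of N.
So every finitely generated submodule of A is generated by sr(B) + sr(A/B) elements, and the
least such bound r is itself a special rank of A: some finitely generated submodule needs r
generators, and then any r-element generating set of it is minimal.\<close>

lemma submodule_Inter:
  assumes "F \<noteq> {}" "\<And>N. N \<in> F \<Longrightarrow> submodule N R M"
  shows "submodule (\<Inter>F) R M"
proof (intro submodule.intro subgroup.intro submodule_axioms.intro)
  have sg: "\<And>N. N \<in> F \<Longrightarrow> subgroup N (add_monoid M)"
    by (rule submodule.axioms(1)[OF assms(2)])
  obtain N0 where "N0 \<in> F" using assms(1) by blast
  then show "\<Inter>F \<subseteq> carrier (add_monoid M)"
    using subgroup.subset[OF sg] by blast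
  show "x \<otimes>\<^bsub>add_monoid M\<^esub> y \<in> \<Inter>F" if "x \<in> \<Inter>F" "y \<in> \<Inter>F" for x y
    using that subgroup.m_closed[OF sg] by blast
  show "\<one>\<^bsub>add_monoid M\<^esub> \<in> \<Inter>F"
    using subgroup.one_closed[OF sg] by blast
  show "inv\<^bsub>add_monoid M\<^esub> x \<in> \<Inter>F" if "x \<in> \<Inter>F" for x
    using that subgroup.m_inv_closed[OF sg] by blast
  show "a \<odot>\<^bsub>M\<^esub> x \<in> \<Inter>F" if "a \<in> carrier R" "x \<in> \<Inter>F" for a x
    using that submodule.smult_closed[OF assms(2)] by blast
qed

lemma submodule_Int: "submodule K R M \<Longrightarrow> submodule L R M \<Longrightarrow> submodule (K \<inter> L) R M"
  using submodule_Inter[of "{K, L}"] by auto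

lemma mspan_superset: "S \<subseteq> mspan R M S"
  unfolding mspan_def by blast

lemma mspan_least: "submodule N R M \<Longrightarrow> S \<subseteq> N \<Longrightarrow> mspan R M S \<subseteq> N"
  unfolding mspan_def by blast

lemma mspan_mono: "S \<subseteq> T \<Longrightarrow> mspan R M S \<subseteq> mspan R M T"
  unfolding mspan_def by blast

lemma submodule_mspan: "submodule N R M \<Longrightarrow> S \<subseteq> N \<Longrightarrow> submodule (mspan R M S) R M"
  unfolding mspan_def by (rule submodule_Inter) auto

definition coeff_ideal ::
  "('a, 'c) ring_scheme \<Rightarrow> ('a, 'b, 'd) module_scheme \<Rightarrow> 'b \<Rightarrow> 'b set \<Rightarrow> 'b set \<Rightarrow> 'a set"
  where "coeff_ideal R M x P L = {b \<in> carrier R. \<exists>y\<in>P. b \<odot>\<^bsub>M\<^esub> x \<oplus>\<^bsub>M\<^esub> y \<in> L}"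

context module
begin

lemma submodule_mspan_carrier: "S \<subseteq> carrier M \<Longrightarrow> submodule (mspan R M S) R M"
  by (rule submodule_mspan[OF carrier_is_submodule])

lemma submodule_zero_closed: "submodule N R M \<Longrightarrow> \<zero>\<^bsub>M\<^esub> \<in> N"
  using subgroup.one_closed[OF submodule.axioms(1), of N R M] by simp

lemma submodule_diff_closed:
  "submodule N R M \<Longrightarrow> x \<in> N \<Longrightarrow> y \<in> N \<Longrightarrow> x \<oplus>\<^bsub>M\<^esub> \<ominus>\<^bsub>M\<^esub> y \<in> N"
  using submoduleE(3,5) by blast

lemma submodule_mem_of_diff:
  assumes N: "submodule N R M" and z: "z \<in> carrier M" and w: "w \<in> N"
    and d: "z \<oplus>\<^bsub>M\<^esub> \<ominus>\<^bsub>M\<^esub> w \<in> N"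
  shows "z \<in> N"
proof -
  have "w \<in> carrier M" using subsetD[OF submoduleE(1)[OF N] w] .
  then have "(z \<oplus>\<^bsub>M\<^esub> \<ominus>\<^bsub>M\<^esub> w) \<oplus>\<^bsub>M\<^esub> w = z" using z by (simp add: M.a_assoc M.l_neg)
  then show ?thesis using submoduleE(5)[OF N d w] by simp
qed

lemma lincomb_add:
  assumes "a \<in> carrier R" "b \<in> carrier R" "x \<in> carrier M" "y \<in> carrier M" "z \<in> carrier M"
  shows "(a \<odot>\<^bsub>M\<^esub> x \<oplus>\<^bsub>M\<^esub> y) \<oplus>\<^bsub>M\<^esub> (b \<odot>\<^bsub>M\<^esub> x \<oplus>\<^bsub>M\<^esub> z)
    = (a \<oplus> b) \<odot>\<^bsub>M\<^esub> x \<oplus>\<^bsub>M\<^esub> (y \<oplus>\<^bsub>M\<^esub> z)"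
  using assms by (simp add: smult_l_distr M.a_ac)

lemma lincomb_neg:
  assumes "a \<in> carrier R" "x \<in> carrier M" "y \<in> carrier M"
  shows "\<ominus>\<^bsub>M\<^esub> (a \<odot>\<^bsub>M\<^esub> x \<oplus>\<^bsub>M\<^esub> y) = (\<ominus> a) \<odot>\<^bsub>M\<^esub> x \<oplus>\<^bsub>M\<^esub> \<ominus>\<^bsub>M\<^esub> y"
  using assms by (simp add: smult_l_minus M.minus_add)

lemma lincomb_smult:
  assumes "c \<in> carrier R" "a \<in> carrier R" "x \<in> carrier M" "y \<in> carrier M"
  shows "c \<odot>\<^bsub>M\<^esub> (a \<odot>\<^bsub>M\<^esub> x \<oplus>\<^bsub>M\<^esub> y) = (c \<otimes> a) \<odot>\<^bsub>M\<^esub> x \<oplus>\<^bsub>M\<^esub> c \<odot>\<^bsub>M\<^esub> y"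
  using assms by (simp add: smult_r_distr smult_assoc1)

lemma lincomb_diff:
  assumes "b \<in> carrier R" "x \<in> carrier M" "y \<in> carrier M" "y' \<in> carrier M"
  shows "(b \<odot>\<^bsub>M\<^esub> x \<oplus>\<^bsub>M\<^esub> y) \<oplus>\<^bsub>M\<^esub> \<ominus>\<^bsub>M\<^esub> (b \<odot>\<^bsub>M\<^esub> x \<oplus>\<^bsub>M\<^esub> y')
    = y \<oplus>\<^bsub>M\<^esub> \<ominus>\<^bsub>M\<^esub> y'"
  using assms by (simp add: M.minus_add M.a_ac M.r_neg1 M.r_neg)

lemma submodule_lincombs:
  assumes P: "submodule P R M" and x: "x \<in> carrier M"
  shows "submodule {a \<odot>\<^bsub>M\<^esub> x \<oplus>\<^bsub>M\<^esub> y | a y. a \<in> carrier R \<and> y \<in> P} R M"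
    (is "submodule ?W R M")
proof (rule submoduleI)
  have Pc: "\<And>y. y \<in> P \<Longrightarrow> y \<in> carrier M" using submoduleE(1)[OF P] by blast
  show "?W \<subseteq> carrier M" using x Pc by auto
  have "\<zero>\<^bsub>M\<^esub> = \<zero> \<odot>\<^bsub>M\<^esub> x \<oplus>\<^bsub>M\<^esub> \<zero>\<^bsub>M\<^esub>" using x by simp
  then show "\<zero>\<^bsub>M\<^esub> \<in> ?W" using submodule_zero_closed[OF P] by blast
  show "\<ominus>\<^bsub>M\<^esub> v \<in> ?W" if "v \<in> ?W" for v
    using that x Pc lincomb_neg submoduleE(3)[OF P] by fastforce
  show "v \<oplus>\<^bsub>M\<^esub> w \<in> ?W" if "v \<in> ?W" "w \<in> ?W" for v w
    using that x Pc lincomb_add submoduleE(5)[OF P] by fastforce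
  show "c \<odot>\<^bsub>M\<^esub> v \<in> ?W" if "c \<in> carrier R" "v \<in> ?W" for c v
    using that x Pc lincomb_smult submoduleE(4)[OF P] by fastforce
qed

lemma mspan_insertE:
  assumes x: "x \<in> carrier M" and S: "S \<subseteq> carrier M" and z: "z \<in> mspan R M (insert x S)"
  obtains a y where "a \<in> carrier R" "y \<in> mspan R M S" "z = a \<odot>\<^bsub>M\<^esub> x \<oplus>\<^bsub>M\<^esub> y"
proof -
  let ?W = "{a \<odot>\<^bsub>M\<^esub> x \<oplus>\<^bsub>M\<^esub> y | a y. a \<in> carrier R \<and> y \<in> mspan R M S}"
  have P: "submodule (mspan R M S) R M" using submodule_mspan_carrier[OF S] .
  have "x = \<one> \<odot>\<^bsub>M\<^esub> x \<oplus>\<^bsub>M\<^esub> \<zero>\<^bsub>M\<^esub>" using x by simp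
  then have "x \<in> ?W" using submodule_zero_closed[OF P] by blast
  moreover have "v = \<zero> \<odot>\<^bsub>M\<^esub> x \<oplus>\<^bsub>M\<^esub> v" if "v \<in> S" for v
    using that x S by auto
  then have "S \<subseteq> ?W" using mspan_superset[of S R M] by blast
  ultimately have "mspan R M (insert x S) \<subseteq> ?W"
    by (intro mspan_least[OF submodule_lincombs[OF P x]]) blast
  then show ?thesis using z that by blast
qed

lemma ideal_coeff_ideal:
  assumes L: "submodule L R M" and P: "submodule P R M" and x: "x \<in> carrier M"
  shows "ideal (coeff_ideal R M x P L) R"
proof -
  let ?I = "coeff_ideal R M x P L"
  have Pc: "\<And>y. y \<in> P \<Longrightarrow> y \<in> carrier M" using submoduleE(1)[OF P] by blast
  have closed: "c \<otimes> a \<in> ?I" if "a \<in> ?I" "c \<in> carrier R" for a c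
    using that x Pc lincomb_smult submoduleE(4)[OF L] submoduleE(4)[OF P]
    unfolding coeff_ideal_def by (smt (verit) R.m_closed mem_Collect_eq)
  have "subgroup ?I (add_monoid R)"
  proof (rule R.add.subgroupI)
    show "?I \<subseteq> carrier R" unfolding coeff_ideal_def by blast
    have "\<zero> \<odot>\<^bsub>M\<^esub> x \<oplus>\<^bsub>M\<^esub> \<zero>\<^bsub>M\<^esub> \<in> L" using x submodule_zero_closed[OF L] by simp
    then show "?I \<noteq> {}" using submodule_zero_closed[OF P] unfolding coeff_ideal_def by blast
    show "\<ominus> a \<in> ?I" if "a \<in> ?I" for a
      using that x Pc lincomb_neg submoduleE(3)[OF L] submoduleE(3)[OF P]
      unfolding coeff_ideal_def by (smt (verit) R.a_inv_closed mem_Collect_eq)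
    show "a \<oplus> b \<in> ?I" if "a \<in> ?I" "b \<in> ?I" for a b
      using that x Pc lincomb_add submoduleE(5)[OF L] submoduleE(5)[OF P]
      unfolding coeff_ideal_def by (smt (verit) R.a_closed mem_Collect_eq)
  qed
  then show ?thesis
    using closed R.m_comm by (intro idealI[OF R.ring_axioms]) (auto simp: coeff_ideal_def)
qed

lemma coeff_ideal_subset_span_lifts:
  assumes P: "submodule P R M" and x: "x \<in> carrier M"
    and A: "A \<subseteq> carrier R" "coeff_ideal R M x P K = Idl A"
    and k: "\<And>a. a \<in> A \<Longrightarrow> k a \<in> carrier M \<and> (\<exists>y\<in>P. k a = a \<odot>\<^bsub>M\<^esub> x \<oplus>\<^bsub>M\<^esub> y)"
  shows "coeff_ideal R M x P K \<subseteq> coeff_ideal R M x P (mspan R M (k ` A))"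
proof -
  have "k ` A \<subseteq> carrier M" using k by blast
  then have J: "ideal (coeff_ideal R M x P (mspan R M (k ` A))) R"
    using ideal_coeff_ideal[OF submodule_mspan_carrier P x] by blast
  have "A \<subseteq> coeff_ideal R M x P (mspan R M (k ` A))"
  proof
    fix a assume a: "a \<in> A"
    then obtain y where "y \<in> P" "k a = a \<odot>\<^bsub>M\<^esub> x \<oplus>\<^bsub>M\<^esub> y" using k by blast
    moreover have "k a \<in> mspan R M (k ` A)" using a mspan_superset[of "k ` A" R M] by blast
    ultimately show "a \<in> coeff_ideal R M x P (mspan R M (k ` A))"
      using a A(1) unfolding coeff_ideal_def by auto
  qed
  then show ?thesis using R.genideal_minimal[OF J] A(2) by simp
qed

lemma mspan_Un_coeff_lifts_eq:
  assumes K: "submodule K R M" and x: "x \<in> carrier M" and S: "S \<subseteq> carrier M"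
    and K_sub: "K \<subseteq> mspan R M (insert x S)"
    and T: "mspan R M T = K \<inter> mspan R M S"
    and A: "A \<subseteq> carrier R" "coeff_ideal R M x (mspan R M S) K = Idl A"
    and k: "\<And>a. a \<in> A \<Longrightarrow> k a \<in> K \<and> (\<exists>y\<in>mspan R M S. k a = a \<odot>\<^bsub>M\<^esub> x \<oplus>\<^bsub>M\<^esub> y)"
  shows "mspan R M (T \<union> k ` A) = K"
proof
  let ?P = "mspan R M S" and ?G = "T \<union> k ` A"
  have P: "submodule ?P R M" using submodule_mspan_carrier[OF S] .
  have Kc: "K \<subseteq> carrier M" using submoduleE(1)[OF K] .
  have Pc: "?P \<subseteq> carrier M" using submoduleE(1)[OF P] .
  have "T \<subseteq> K" using T mspan_superset[of T R M] by blast
  then have GK: "?G \<subseteq> K" using k by blast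
  then show "mspan R M ?G \<subseteq> K" by (rule mspan_least[OF K])
  have G: "submodule (mspan R M ?G) R M" using GK Kc by (intro submodule_mspan_carrier) blast
  have k_carrier: "\<And>a. a \<in> A \<Longrightarrow> k a \<in> carrier M \<and> (\<exists>y\<in>?P. k a = a \<odot>\<^bsub>M\<^esub> x \<oplus>\<^bsub>M\<^esub> y)"
    using k Kc by blast
  have kK: "mspan R M (k ` A) \<subseteq> K" using k by (intro mspan_least[OF K]) blast
  show "K \<subseteq> mspan R M ?G"
  proof
    fix z assume zK: "z \<in> K"
    then have "z \<in> mspan R M (insert x S)" using K_sub by blast
    then obtain b y where b: "b \<in> carrier R" and y: "y \<in> ?P" and z: "z = b \<odot>\<^bsub>M\<^esub> x \<oplus>\<^bsub>M\<^esub> y"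
      by (rule mspan_insertE[OF x S])
    have "b \<in> coeff_ideal R M x ?P K" using b y z zK unfolding coeff_ideal_def by blast
    then have "b \<in> coeff_ideal R M x ?P (mspan R M (k ` A))"
      using coeff_ideal_subset_span_lifts[OF P x A k_carrier] by blast
    then obtain y' where y': "y' \<in> ?P" and w: "b \<odot>\<^bsub>M\<^esub> x \<oplus>\<^bsub>M\<^esub> y' \<in> mspan R M (k ` A)"
      unfolding coeff_ideal_def by blast
    define w where "w = b \<odot>\<^bsub>M\<^esub> x \<oplus>\<^bsub>M\<^esub> y'"
    have wG: "w \<in> mspan R M ?G" using w mspan_mono[of "k ` A" ?G R M] unfolding w_def by blast
    have wK: "w \<in> K" using w kK unfolding w_def by blast
    have "z \<oplus>\<^bsub>M\<^esub> \<ominus>\<^bsub>M\<^esub> w = y \<oplus>\<^bsub>M\<^esub> \<ominus>\<^bsub>M\<^esub> y'"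
      unfolding z w_def using lincomb_diff[OF b x] y y' Pc by blast
    moreover have "z \<oplus>\<^bsub>M\<^esub> \<ominus>\<^bsub>M\<^esub> w \<in> K" using submodule_diff_closed[OF K zK wK] .
    moreover have "y \<oplus>\<^bsub>M\<^esub> \<ominus>\<^bsub>M\<^esub> y' \<in> ?P" using submodule_diff_closed[OF P y y'] .
    ultimately have "z \<oplus>\<^bsub>M\<^esub> \<ominus>\<^bsub>M\<^esub> w \<in> mspan R M T" using T by simp
    then have "z \<oplus>\<^bsub>M\<^esub> \<ominus>\<^bsub>M\<^esub> w \<in> mspan R M ?G" using mspan_mono[of T ?G R M] by blast
    then show "z \<in> mspan R M ?G" by (rule submodule_mem_of_diff[OF G subsetD[OF Kc zK] wG])
  qed
qed

lemma finitely_generated_submodule_of_mspan: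
  assumes noeth: "noetherian_ring R" and S: "finite S" "S \<subseteq> carrier M"
    and K: "submodule K R M" "K \<subseteq> mspan R M S"
  shows "\<exists>T. finite T \<and> T \<subseteq> K \<and> mspan R M T = K"
  using S K
proof (induction S arbitrary: K rule: finite_induct)
  case empty
  then have "mspan R M {} = K" using mspan_least[of K R M "{}"] by blast
  then show ?case by blast
next
  case (insert x S)
  have x: "x \<in> carrier M" and S: "S \<subseteq> carrier M" using insert.prems(1) by auto
  let ?P = "mspan R M S"
  have P: "submodule ?P R M" using submodule_mspan_carrier[OF S] .
  obtain A where A: "A \<subseteq> carrier R" "finite A" "coeff_ideal R M x ?P K = Idl A"
    using noetherian_ring.finetely_gen[OF noeth ideal_coeff_ideal[OF insert.prems(2) P x]] by blast
  have "A \<subseteq> coeff_ideal R M x ?P K" using R.genideal_self[OF A(1)] A(3) by simp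
  then have "\<forall>a\<in>A. \<exists>y. y \<in> ?P \<and> a \<odot>\<^bsub>M\<^esub> x \<oplus>\<^bsub>M\<^esub> y \<in> K" unfolding coeff_ideal_def by blast
  then obtain f where f: "\<And>a. a \<in> A \<Longrightarrow> f a \<in> ?P \<and> a \<odot>\<^bsub>M\<^esub> x \<oplus>\<^bsub>M\<^esub> f a \<in> K" by metis
  define k where "k a = a \<odot>\<^bsub>M\<^esub> x \<oplus>\<^bsub>M\<^esub> f a" for a
  have k: "\<And>a. a \<in> A \<Longrightarrow> k a \<in> K \<and> (\<exists>y\<in>?P. k a = a \<odot>\<^bsub>M\<^esub> x \<oplus>\<^bsub>M\<^esub> y)"
    using f unfolding k_def by blast
  have "K \<inter> ?P \<subseteq> ?P" by blast
  then obtain T where T: "finite T" "mspan R M T = K \<inter> ?P"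
    using insert.IH[OF S submodule_Int[OF insert.prems(2) P]] by blast
  have G: "mspan R M (T \<union> k ` A) = K"
    using mspan_Un_coeff_lifts_eq[OF insert.prems(2) x S insert.prems(3) T(2) A(1,3) k] .
  then have "T \<union> k ` A \<subseteq> K" using mspan_superset[of "T \<union> k ` A" R M] by blast
  moreover have "finite (T \<union> k ` A)" using T(1) A(2) by simp
  ultimately show ?case using G by blast
qed

end

definition generators_bounded ::
  "('a, 'c) ring_scheme \<Rightarrow> ('a, 'b, 'd) module_scheme \<Rightarrow> nat \<Rightarrow> bool"
  where "generators_bounded R M r \<longleftrightarrow>
    (\<forall>N. fg_submodule R M N \<longrightarrow> (\<exists>S. finite S \<and> card S \<le> r \<and> generates R M S N))"

locale module_submodule = module +
  fixes B
  assumes submodule_B: "submodule B R M"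
begin

abbreviation Q where "Q \<equiv> quot_module R M B"

abbreviation proj where "proj x \<equiv> B +>\<^bsub>M\<^esub> x"

lemma B_carrier: "B \<subseteq> carrier M"
  using submoduleE(1)[OF submodule_B] .

lemma abelian_subgroup_B: "abelian_subgroup B M"
  using abelian_subgroupI3[OF additive_subgroup.intro[OF submodule.axioms(1)[OF submodule_B]]]
    M.abelian_group_axioms .

lemma proj_carrier: "x \<in> carrier M \<Longrightarrow> proj x \<in> carrier Q"
  using a_rcosetsI[OF B_carrier] by (simp add: quot_module_def)

lemma quot_add_proj:
  "x \<in> carrier M \<Longrightarrow> y \<in> carrier M \<Longrightarrow> proj x \<oplus>\<^bsub>Q\<^esub> proj y = proj (x \<oplus>\<^bsub>M\<^esub> y)"
  using abelian_subgroup.a_rcos_sum[OF abelian_subgroup_B] by (simp add: quot_module_def)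

lemma quot_zero: "\<zero>\<^bsub>Q\<^esub> = proj \<zero>\<^bsub>M\<^esub>"
  using a_coset_add_zero[OF B_carrier] by (simp add: quot_module_def)

lemma quot_a_inv_proj:
  assumes x: "x \<in> carrier M"
  shows "inv\<^bsub>add_monoid Q\<^esub> (proj x) = proj (\<ominus>\<^bsub>M\<^esub> x)"
proof -
  have "m_inv (add_monoid Q) = m_inv (M A_Mod B)"
    by (rule ext) (simp add: m_inv_def A_FactGroup_def' quot_module_def)
  moreover have "proj x \<in> carrier (M A_Mod B)"
    using a_rcosetsI[OF B_carrier x] by (simp add: A_FactGroup_def')
  ultimately show ?thesis
    using abelian_subgroup.a_inv_FactGroup[OF abelian_subgroup_B]
      abelian_subgroup.a_rcos_inv[OF abelian_subgroup_B x] by simp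
qed

lemma proj_eq_imp_diff_mem:
  "x \<in> carrier M \<Longrightarrow> y \<in> carrier M \<Longrightarrow> proj x = proj y \<Longrightarrow> x \<oplus>\<^bsub>M\<^esub> \<ominus>\<^bsub>M\<^esub> y \<in> B"
  using abelian_subgroup.a_rcos_module[OF abelian_subgroup_B, of y x]
    abelian_subgroup.a_rcos_self[OF abelian_subgroup_B, of x] by simp

lemma quot_smult_proj:
  assumes a: "a \<in> carrier R" and x: "x \<in> carrier M"
  shows "a \<odot>\<^bsub>Q\<^esub> proj x = proj (a \<odot>\<^bsub>M\<^esub> x)"
proof -
  have "proj (a \<odot>\<^bsub>M\<^esub> y) = proj (a \<odot>\<^bsub>M\<^esub> x)" if y: "y \<in> proj x" for y
  proof -
    have yc: "y \<in> carrier M" using abelian_subgroup.a_elemrcos_carrier[OF abelian_subgroup_B x y] .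
    have "y \<oplus>\<^bsub>M\<^esub> \<ominus>\<^bsub>M\<^esub> x \<in> B"
      using abelian_subgroup.a_rcos_module_imp[OF abelian_subgroup_B x y] .
    then have "a \<odot>\<^bsub>M\<^esub> (y \<oplus>\<^bsub>M\<^esub> \<ominus>\<^bsub>M\<^esub> x) \<in> B" using submoduleE(4)[OF submodule_B a] by blast
    moreover have "a \<odot>\<^bsub>M\<^esub> (y \<oplus>\<^bsub>M\<^esub> \<ominus>\<^bsub>M\<^esub> x) = a \<odot>\<^bsub>M\<^esub> y \<oplus>\<^bsub>M\<^esub> \<ominus>\<^bsub>M\<^esub> (a \<odot>\<^bsub>M\<^esub> x)"
      using a x yc by (simp add: smult_r_distr smult_r_minus)
    ultimately have "a \<odot>\<^bsub>M\<^esub> y \<in> proj (a \<odot>\<^bsub>M\<^esub> x)"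
      using abelian_subgroup.a_rcos_module_rev[OF abelian_subgroup_B, of "a \<odot>\<^bsub>M\<^esub> x" "a \<odot>\<^bsub>M\<^esub> y"]
        a x yc by simp
    then show ?thesis
      using abelian_subgroup.a_repr_independence'[OF abelian_subgroup_B] a x by (metis smult_closed)
  qed
  moreover have "a \<odot>\<^bsub>Q\<^esub> proj x = (\<Union>y\<in>proj x. proj (a \<odot>\<^bsub>M\<^esub> y))"
    by (simp add: quot_module_def)
  ultimately show ?thesis
    using abelian_subgroup.a_rcos_self[OF abelian_subgroup_B x] by blast
qed

lemma submodule_proj_image:
  assumes L: "submodule L R M"
  shows "submodule (proj ` L) R Q"
proof (intro submodule.intro subgroup.intro submodule_axioms.intro)
  have Lc: "\<And>x. x \<in> L \<Longrightarrow> x \<in> carrier M" using submoduleE(1)[OF L] by blast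
  show "proj ` L \<subseteq> carrier (add_monoid Q)" using proj_carrier Lc by auto
  show "U \<otimes>\<^bsub>add_monoid Q\<^esub> W \<in> proj ` L" if UW: "U \<in> proj ` L" "W \<in> proj ` L" for U W
  proof -
    obtain x y where "x \<in> L" "y \<in> L" "U = proj x" "W = proj y" using UW by blast
    then show ?thesis using quot_add_proj[OF Lc Lc] submoduleE(5)[OF L] by simp
  qed
  show "\<one>\<^bsub>add_monoid Q\<^esub> \<in> proj ` L"
    using quot_zero submodule_zero_closed[OF L] by simp
  show "inv\<^bsub>add_monoid Q\<^esub> U \<in> proj ` L" if U: "U \<in> proj ` L" for U
  proof -
    obtain x where "x \<in> L" "U = proj x" using U by blast
    then show ?thesis using quot_a_inv_proj[OF Lc] submoduleE(3)[OF L] by simp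
  qed
  show "a \<odot>\<^bsub>Q\<^esub> U \<in> proj ` L" if a: "a \<in> carrier R" and U: "U \<in> proj ` L" for a U
  proof -
    obtain x where "x \<in> L" "U = proj x" using U by blast
    then show ?thesis using quot_smult_proj[OF a Lc] submoduleE(4)[OF L a] by simp
  qed
qed

lemma submodule_proj_vimage:
  assumes V: "submodule V R Q"
  shows "submodule {x \<in> carrier M. proj x \<in> V} R M"
proof (rule submoduleI)
  have sg: "subgroup V (add_monoid Q)" using submodule.axioms(1)[OF V] .
  show "{x \<in> carrier M. proj x \<in> V} \<subseteq> carrier M" by blast
  show "\<zero>\<^bsub>M\<^esub> \<in> {x \<in> carrier M. proj x \<in> V}"
    using subgroup.one_closed[OF sg] quot_zero by simp
  show "\<ominus>\<^bsub>M\<^esub> x \<in> {x \<in> carrier M. proj x \<in> V}" if "x \<in> {x \<in> carrier M. proj x \<in> V}" for x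
    using that subgroup.m_inv_closed[OF sg] quot_a_inv_proj by fastforce
  show "x \<oplus>\<^bsub>M\<^esub> y \<in> {x \<in> carrier M. proj x \<in> V}"
    if "x \<in> {x \<in> carrier M. proj x \<in> V}" "y \<in> {x \<in> carrier M. proj x \<in> V}" for x y
    using that subgroup.m_closed[OF sg] quot_add_proj by fastforce
  show "a \<odot>\<^bsub>M\<^esub> x \<in> {x \<in> carrier M. proj x \<in> V}"
    if "a \<in> carrier R" "x \<in> {x \<in> carrier M. proj x \<in> V}" for a x
    using that submodule.smult_closed[OF V] quot_smult_proj by fastforce
qed

lemma submodule_submod_iff: "submodule N R (submod M B) \<longleftrightarrow> submodule N R M \<and> N \<subseteq> B"
proof -
  have add: "add_monoid (submod M B) = (add_monoid M)\<lparr>carrier := B\<rparr>" by (simp add: submod_def)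
  have B: "subgroup B (add_monoid M)" using submodule.axioms(1)[OF submodule_B] .
  have "subgroup N (add_monoid (submod M B)) \<longleftrightarrow> subgroup N (add_monoid M) \<and> N \<subseteq> B"
    unfolding add using group.incl_subgroup[OF M.a_group B] group.subgroup_incl[OF M.a_group _ B]
      subgroup.subset by fastforce
  then show ?thesis
    unfolding submodule_def submodule_axioms_def by (auto simp: submod_def)
qed

lemma mspan_submod:
  assumes SB: "S \<subseteq> B"
  shows "mspan R (submod M B) S = mspan R M S"
proof
  have "submodule (mspan R M S) R M" using SB B_carrier by (intro submodule_mspan_carrier) blast
  moreover have "mspan R M S \<subseteq> B" using mspan_least[OF submodule_B SB] .
  ultimately have "submodule (mspan R M S) R (submod M B)" using submodule_submod_iff by blast
  then show "mspan R (submod M B) S \<subseteq> mspan R M S" by (rule mspan_least[OF _ mspan_superset])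
next
  have "submodule B R (submod M B)" using submodule_submod_iff submodule_B by blast
  then have "submodule (mspan R (submod M B) S) R (submod M B)" using SB by (rule submodule_mspan)
  then have "submodule (mspan R (submod M B) S) R M" using submodule_submod_iff by blast
  then show "mspan R M S \<subseteq> mspan R (submod M B) S" by (rule mspan_least[OF _ mspan_superset])
qed

lemma fg_submodule_submod_Int:
  assumes noeth: "noetherian_ring R" and N: "fg_submodule R M N"
  shows "fg_submodule R (submod M B) (N \<inter> B)"
proof -
  have NM: "submodule N R M" using N unfolding fg_submodule_def by blast
  obtain G where G: "finite G" "G \<subseteq> N" "mspan R M G = N"
    using N unfolding fg_submodule_def generates_def by blast
  have NB: "submodule (N \<inter> B) R M" using submodule_Int[OF NM submodule_B] .
  have "G \<subseteq> carrier M" using G(2) submoduleE(1)[OF NM] by blast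
  moreover have "N \<inter> B \<subseteq> mspan R M G" using G(3) by blast
  ultimately obtain T where T: "finite T" "T \<subseteq> N \<inter> B" "mspan R M T = N \<inter> B"
    using finitely_generated_submodule_of_mspan[OF noeth G(1) _ NB] by blast
  then have "generates R (submod M B) T (N \<inter> B)"
    unfolding generates_def using mspan_submod[of T] by auto
  moreover have "submodule (N \<inter> B) R (submod M B)" using submodule_submod_iff NB by blast
  ultimately show ?thesis unfolding fg_submodule_def using T(1) by blast
qed

lemma mspan_proj_image:
  assumes G: "G \<subseteq> carrier M"
  shows "mspan R Q (proj ` G) = proj ` mspan R M G"
proof
  have "submodule (proj ` mspan R M G) R Q"
    using submodule_proj_image[OF submodule_mspan_carrier[OF G]] .
  moreover have "proj ` G \<subseteq> proj ` mspan R M G" using mspan_superset[of G R M] by blast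
  ultimately show "mspan R Q (proj ` G) \<subseteq> proj ` mspan R M G" by (rule mspan_least)
next
  have "submodule (mspan R Q (proj ` G)) R Q"
    using G by (intro submodule_mspan[OF submodule_proj_image[OF carrier_is_submodule]]) blast
  then have "submodule {x \<in> carrier M. proj x \<in> mspan R Q (proj ` G)} R M"
    by (rule submodule_proj_vimage)
  moreover have "G \<subseteq> {x \<in> carrier M. proj x \<in> mspan R Q (proj ` G)}"
    using G mspan_superset[of "proj ` G" R Q] by blast
  ultimately have "mspan R M G \<subseteq> {x \<in> carrier M. proj x \<in> mspan R Q (proj ` G)}"
    by (rule mspan_least)
  then show "proj ` mspan R M G \<subseteq> mspan R Q (proj ` G)" by blast
qed

lemma fg_submodule_proj_image:
  assumes N: "fg_submodule R M N"
  shows "fg_submodule R Q (proj ` N)"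
proof -
  have NM: "submodule N R M" using N unfolding fg_submodule_def by blast
  obtain G where G: "finite G" "G \<subseteq> N" "mspan R M G = N"
    using N unfolding fg_submodule_def generates_def by blast
  have "G \<subseteq> carrier M" using G(2) submoduleE(1)[OF NM] by blast
  then have "generates R Q (proj ` G) (proj ` N)"
    unfolding generates_def using mspan_proj_image G by auto
  then show ?thesis
    unfolding fg_submodule_def using submodule_proj_image[OF NM] G(1) by blast
qed

lemma proj_lift_generators:
  assumes N: "submodule N R M" and S: "finite S" "generates R Q S (proj ` N)"
  obtains Y where "finite Y" "card Y = card S" "Y \<subseteq> N" "proj ` N = proj ` mspan R M Y"
proof -
  have "S \<subseteq> proj ` N" using S(2) unfolding generates_def by blast
  then obtain Y where Y: "Y \<subseteq> N" "inj_on proj Y" "S = proj ` Y"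
    using subset_image_inj[of S proj N] by blast
  have "Y \<subseteq> carrier M" using Y(1) submoduleE(1)[OF N] by blast
  then have "proj ` N = proj ` mspan R M Y"
    using S(2) Y(3) mspan_proj_image unfolding generates_def by simp
  moreover have "finite Y" using S(1) Y(2,3) by (simp add: finite_image_iff)
  moreover have "card Y = card S" using card_image[OF Y(2)] Y(3) by simp
  ultimately show ?thesis using that Y(1) by blast
qed

lemma mspan_Un_eq_of_proj:
  assumes N: "submodule N R M" and T: "mspan R M T = N \<inter> B" and Y: "Y \<subseteq> N"
    and NY: "proj ` N = proj ` mspan R M Y"
  shows "mspan R M (Y \<union> T) = N"
proof
  have Nc: "N \<subseteq> carrier M" using submoduleE(1)[OF N] .
  have "T \<subseteq> N" using T mspan_superset[of T R M] by blast
  then show "mspan R M (Y \<union> T) \<subseteq> N" using Y by (intro mspan_least[OF N]) blast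
  have S: "submodule (mspan R M (Y \<union> T)) R M"
    using Y \<open>T \<subseteq> N\<close> Nc by (intro submodule_mspan_carrier) blast
  have YN: "mspan R M Y \<subseteq> N" using mspan_least[OF N Y] .
  show "N \<subseteq> mspan R M (Y \<union> T)"
  proof
    fix n assume n: "n \<in> N"
    then obtain y where y: "y \<in> mspan R M Y" "proj n = proj y" using NY by blast
    have yN: "y \<in> N" using y(1) YN by blast
    have "n \<oplus>\<^bsub>M\<^esub> \<ominus>\<^bsub>M\<^esub> y \<in> N \<inter> B"
      using submodule_diff_closed[OF N n yN] proj_eq_imp_diff_mem[OF subsetD[OF Nc n] subsetD[OF Nc yN] y(2)]
      by blast
    then have "n \<oplus>\<^bsub>M\<^esub> \<ominus>\<^bsub>M\<^esub> y \<in> mspan R M (Y \<union> T)"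
      using T mspan_mono[of T "Y \<union> T" R M] by blast
    moreover have "y \<in> mspan R M (Y \<union> T)" using y(1) mspan_mono[of Y "Y \<union> T" R M] by blast
    ultimately show "n \<in> mspan R M (Y \<union> T)"
      using submodule_mem_of_diff[OF S subsetD[OF Nc n]] by blast
  qed
qed

lemma generators_bounded_extension:
  assumes noeth: "noetherian_ring R"
    and s: "generators_bounded R (submod M B) s" and t: "generators_bounded R Q t"
  shows "generators_bounded R M (s + t)"
  unfolding generators_bounded_def
proof (intro allI impI)
  fix N assume N: "fg_submodule R M N"
  have NM: "submodule N R M" using N unfolding fg_submodule_def by blast
  obtain T where T: "finite T" "card T \<le> s" "generates R (submod M B) T (N \<inter> B)"
    using s fg_submodule_submod_Int[OF noeth N] unfolding generators_bounded_def by blast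
  then have TN: "T \<subseteq> N" and T_span: "mspan R M T = N \<inter> B"
    using mspan_submod[of T] unfolding generates_def by auto
  obtain S where S: "finite S" "card S \<le> t" "generates R Q S (proj ` N)"
    using t fg_submodule_proj_image[OF N] unfolding generators_bounded_def by blast
  obtain Y where Y: "finite Y" "card Y = card S" "Y \<subseteq> N" "proj ` N = proj ` mspan R M Y"
    by (rule proj_lift_generators[OF NM S(1,3)])
  have "mspan R M (Y \<union> T) = N" using mspan_Un_eq_of_proj[OF NM T_span Y(3,4)] .
  moreover have "card (Y \<union> T) \<le> s + t" using card_Un_le[of Y T] T(2) S(2) Y(2) by linarith
  ultimately show "\<exists>S. finite S \<and> card S \<le> s + t \<and> generates R M S N"
    unfolding generates_def using T(1) Y(1,3) TN by blast
qed

end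

lemma has_special_rank_generators_bounded:
  "has_special_rank R M r \<Longrightarrow> generators_bounded R M r"
  unfolding has_special_rank_def generators_bounded_def by blast

lemma (in module) least_generators_bound_attained:
  assumes r: "generators_bounded R M r" and least: "\<And>r'. r' < r \<Longrightarrow> \<not> generators_bounded R M r'"
  shows "\<exists>N S. fg_submodule R M N \<and> minimal_generating R M S N \<and> finite S \<and> card S = r"
proof (cases r)
  case 0
  have "generates R M {} (mspan R M {})" unfolding generates_def by simp
  moreover have "submodule (mspan R M {}) R M" using submodule_mspan_carrier by blast
  ultimately have "fg_submodule R M (mspan R M {}) \<and> minimal_generating R M {} (mspan R M {})"
    unfolding fg_submodule_def minimal_generating_def by blast
  then show ?thesis using 0 by (intro exI[of _ "mspan R M {}"] exI[of _ "{}"]) simp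
next
  case (Suc r')
  have "\<not> generators_bounded R M r'" using least Suc by simp
  then obtain N where N: "fg_submodule R M N"
    and few: "\<And>S. finite S \<Longrightarrow> card S \<le> r' \<Longrightarrow> \<not> generates R M S N"
    unfolding generators_bounded_def by blast
  obtain S where S: "finite S" "card S \<le> r" "generates R M S N"
    using r N unfolding generators_bounded_def by blast
  have "\<not> card S \<le> r'" using few[OF S(1)] S(3) by blast
  then have card_S: "card S = r" using S(2) Suc by linarith
  moreover have "\<not> generates R M T N" if T: "T \<subset> S" for T
  proof -
    have "finite T" using S(1) T by (meson finite_subset psubset_imp_subset)
    moreover have "card T \<le> r'" using psubset_card_mono[OF S(1) T] card_S Suc by linarith
    ultimately show ?thesis by (rule few)
  qed
  ultimately show ?thesis using N S unfolding minimal_generating_def by blast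
qed

lemma (in module) generators_bounded_imp_has_special_rank:
  assumes "generators_bounded R M k"
  shows "\<exists>r\<le>k. has_special_rank R M r"
proof -
  let ?r = "LEAST r. generators_bounded R M r"
  have r: "generators_bounded R M ?r" using LeastI[of "generators_bounded R M", OF assms] .
  have "?r \<le> k" using Least_le[of "generators_bounded R M", OF assms] .
  moreover have "\<exists>N S. fg_submodule R M N \<and> minimal_generating R M S N \<and> finite S \<and> card S = ?r"
    using least_generators_bound_attained[OF r not_less_Least[of _ "generators_bounded R M"]] .
  ultimately show ?thesis using r unfolding has_special_rank_def generators_bounded_def by blast
qed

lemma special_rank_finiteE:
  assumes "special_rank R M \<noteq> \<infinity>"
  obtains r where "has_special_rank R M r" "special_rank R M = enat r"
proof -
  have ex: "\<exists>r. has_special_rank R M r"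
    using assms unfolding special_rank_def by (auto split: if_splits)
  show ?thesis using that[OF LeastI_ex[OF ex]] ex unfolding special_rank_def by simp
qed

lemma special_rank_le: "has_special_rank R M r \<Longrightarrow> special_rank R M \<le> enat r"
  unfolding special_rank_def by (auto intro: Least_le)

theorem lemma2:
  fixes R :: "'a ring" and A :: "('a, 'b) module" and B :: "'b set"
  assumes "noetherian_ring R"
    and "module R A"
    and "submodule B R A"
    and "special_rank R (submod A B) \<noteq> \<infinity>"
    and "special_rank R (quot_module R A B) \<noteq> \<infinity>"
  shows "special_rank R A \<le> special_rank R (submod A B) + special_rank R (quot_module R A B)"
proof -
  interpret module_submodule R A B
    by (rule module_submodule.intro[OF assms(2) module_submodule_axioms.intro[OF assms(3)]])
  obtain s where s: "has_special_rank R (submod A B) s" "special_rank R (submod A B) = enat s"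
    using assms(4) by (rule special_rank_finiteE)
  obtain t where t: "has_special_rank R Q t" "special_rank R Q = enat t"
    using assms(5) by (rule special_rank_finiteE)
  have "generators_bounded R A (s + t)"
    using generators_bounded_extension[OF assms(1)] has_special_rank_generators_bounded[OF s(1)]
      has_special_rank_generators_bounded[OF t(1)] .
  then obtain r where r: "r \<le> s + t" "has_special_rank R A r"
    using generators_bounded_imp_has_special_rank by blast
  have "special_rank R A \<le> enat r" using special_rank_le[OF r(2)] .
  also have "\<dots> \<le> enat (s + t)" using r(1) by simp
  also have "\<dots> = special_rank R (submod A B) + special_rank R Q" using s(2) t(2) by simp
  finally show ?thesis .
qed

end
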